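(* Let $\kappa$ be a regular uncountable cardinal and let $\mu,\lambda,\chi,\theta\le\kappa$ be cardinals satisfying $\lambda^{<\chi}<\kappa\le 2^\lambda$ and $\lambda^{<\chi}\le\theta^{<\chi}=\theta$. Then for every partition $p:[\kappa]^2\to\mu$, $\mathrm{pr}_1(\kappa,\kappa,\theta,\chi)_p$ holds if and only if $\mathrm{pr}_0(\kappa,\kappa,\theta,\chi)_p$ holds.
   Context: $[\kappa]^2$ denotes the set of pairs $(\alpha,\beta)$ with $\alpha<\beta<\kappa$; a partition is any function $p:[\kappa]^2\to\mu$. For an ordinal $\sigma$, $[\kappa]^\sigma$ is the set of subsets of $\kappa$ of order type $\sigma$, and for $a\in[\kappa]^\sigma$ and $i<\sigma$, $a(i)$ is the $i$-th element of $a$ in increasing order. For sets of ordinals $a,b$, $a<b$ means $\alpha<\beta$ for all $\alpha\in a,\beta\in b$. Given a partition $p:[\kappa]^2\to\mu$, a coloring $c:[\kappa]^2\to\theta$ witnesses (i) $\mathrm{pr}_1(\kappa,\kappa,\theta,\chi)_p$ iff for every ordinal $\sigma<\chi$, every pairwise disjoint family $\mathcal A\subseteq[\kappa]^\sigma$ with $|\mathcal A|=\kappa$, and every function $\tau:\mu\to\theta$, there are $a,b\in\mathcal A$ with $a<b$ such that $c(\alpha,\beta)=\tau(p(\alpha,\beta))$ for all $\alpha\in a,\beta\in b$; (ii) $\mathrm{pr}_0(\kappa,\kappa,\theta,\chi)_p$ iff for every ordinal $\sigma<\chi$, every pairwise disjoint family $\mathcal A\subseteq[\kappa]^\sigma$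 with $|\mathcal A|=\kappa$, and every matrix $(\tau_{i,j})_{i,j<\sigma}$ of functions from $\mu$ to $\theta$, there are $a,b\in\mathcal A$ with $a<b$ such that $c(a(i),b(j))=\tau_{i,j}(p(a(i),b(j)))$ for all $i,j<\sigma$. The principles $\mathrm{pr}_i(\kappa,\kappa,\theta,\chi)_p$ assert that such a coloring exists. *)

theory Defs
  imports Main "HOL-Library.Countable_Set" "HOL-Library.FuncSet"
begin

text \<open>The cardinal kappa is represented by a cardinal order r (an initial
well-order) on Field r; the ordinals below kappa are the elements of Field r, an ordinal
sigma is a well-order s, and ordinal comparison is ordLess / ordIso.  Other cardinals are
represented either by sets (mu = card_of M, lambda = card_of L, theta = card_of T) or, for chi
which also serves as a bound on ordinals, by a cardinal order ch.\<close>

definition pairs :: "'k rel \<Rightarrow> ('k \<times> 'k) set" where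
  "pairs r = {(\<alpha>, \<beta>). (\<alpha>, \<beta>) \<in> r \<and> \<alpha> \<noteq> \<beta>}"

definition set_less :: "'k rel \<Rightarrow> 'k set \<Rightarrow> 'k set \<Rightarrow> bool" where
  "set_less r a b \<longleftrightarrow> (\<forall>\<alpha>\<in>a. \<forall>\<beta>\<in>b. (\<alpha>, \<beta>) \<in> r \<and> \<alpha> \<noteq> \<beta>)"

definition of_type :: "'k rel \<Rightarrow> 'k set \<Rightarrow> 's rel \<Rightarrow> bool" where
  "of_type r a s \<longleftrightarrow> a \<subseteq> Field r \<and> (Restr r a, s) \<in> ordIso"

definition good_family :: "'k rel \<Rightarrow> 's rel \<Rightarrow> 'k set set \<Rightarrow> bool" where
  "good_family r s \<A> \<longleftrightarrow>
     (\<forall>a\<in>\<A>. of_type r a s) \<and> (\<forall>a\<in>\<A>. \<forall>b\<in>\<A>. a \<noteq> b \<longrightarrow> a \<inter> b = {}) \<and>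
     (card_of \<A>, r) \<in> ordIso"

text \<open>c witnesses pr_1(kappa,kappa,theta,chi)_p.  Ordinals sigma < chi are well-orders s
(on the type of kappa, which realises all ordinals below kappa >= chi) with s <o ch.\<close>
definition pr1_witness ::
  "'k rel \<Rightarrow> 't set \<Rightarrow> 'c rel \<Rightarrow> 'm set \<Rightarrow> ('k \<Rightarrow> 'k \<Rightarrow> 'm) \<Rightarrow> ('k \<Rightarrow> 'k \<Rightarrow> 't) \<Rightarrow> bool" where
  "pr1_witness r T ch M p c \<longleftrightarrow>
     (\<forall>s :: 'k rel. Well_order s \<and> (s, ch) \<in> ordLess \<longrightarrow>
       (\<forall>\<A>. good_family r s \<A> \<longrightarrow>
         (\<forall>\<tau> \<in> M \<rightarrow> T. \<exists>a\<in>\<A>. \<exists>b\<in>\<A>. set_less r a b \<and>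
             (\<forall>\<alpha>\<in>a. \<forall>\<beta>\<in>b. c \<alpha> \<beta> = \<tau> (p \<alpha> \<beta>)))))"

text \<open>c witnesses pr_0(kappa,kappa,theta,chi)_p.  The i-th element a(i) of a is f i, where
f is the (unique) order isomorphism from sigma onto a.\<close>
definition pr0_witness ::
  "'k rel \<Rightarrow> 't set \<Rightarrow> 'c rel \<Rightarrow> 'm set \<Rightarrow> ('k \<Rightarrow> 'k \<Rightarrow> 'm) \<Rightarrow> ('k \<Rightarrow> 'k \<Rightarrow> 't) \<Rightarrow> bool" where
  "pr0_witness r T ch M p c \<longleftrightarrow>
     (\<forall>s :: 'k rel. Well_order s \<and> (s, ch) \<in> ordLess \<longrightarrow>
       (\<forall>\<A>. good_family r s \<A> \<longrightarrow>
         (\<forall>\<tau> :: 'k \<Rightarrow> 'k \<Rightarrow> 'm \<Rightarrow> 't. (\<forall>i\<in>Field s. \<forall>j\<in>Field s. \<tau> i j \<in> M \<rightarrow> T) \<longrightarrow>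
           (\<exists>a\<in>\<A>. \<exists>b\<in>\<A>. set_less r a b \<and>
             (\<exists>f g. iso s (Restr r a) f \<and> iso s (Restr r b) g \<and>
               (\<forall>i\<in>Field s. \<forall>j\<in>Field s. c (f i) (g j) = \<tau> i j (p (f i) (g j))))))))"

definition pr1 ::
  "'k rel \<Rightarrow> 't set \<Rightarrow> 'c rel \<Rightarrow> 'm set \<Rightarrow> ('k \<Rightarrow> 'k \<Rightarrow> 'm) \<Rightarrow> bool" where
  "pr1 r T ch M p \<longleftrightarrow> (\<exists>c. (\<forall>(\<alpha>, \<beta>)\<in>pairs r. c \<alpha> \<beta> \<in> T) \<and> pr1_witness r T ch M p c)"

definition pr0 ::
  "'k rel \<Rightarrow> 't set \<Rightarrow> 'c rel \<Rightarrow> 'm set \<Rightarrow> ('k \<Rightarrow> 'k \<Rightarrow> 'm) \<Rightarrow> bool" where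
  "pr0 r T ch M p \<longleftrightarrow> (\<exists>c. (\<forall>(\<alpha>, \<beta>)\<in>pairs r. c \<alpha> \<beta> \<in> T) \<and> pr0_witness r T ch M p c)"

text \<open>A set witnessing the cardinal lambda^{<chi} = sum over ordinals nu < chi of lambda^|nu|
(the ordinals nu < chi being the initial segments underS ch x of chi).  For infinite lambda
this coincides with sup of lambda^nu over nu < chi.\<close>
definition lt_exp_set :: "'l set \<Rightarrow> 'c rel \<Rightarrow> ('c \<times> ('c \<Rightarrow> 'l)) set" where
  "lt_exp_set L ch = (SIGMA x : Field ch. Func (Order_Relation.underS ch x) L)"

end

theory Submission
  imports Defs
begin

text \<open>Since \<kappa> \<le> 2^\<lambda>, the ordinals below \<kappa> are coded by distinct subsets h(\<alpha>) of \<lambda>.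
Every set a of order type \<sigma> < \<chi> has a set D of size < \<chi> on which the codes of its elements
still differ. There are at most \<lambda>^(<\<chi>) < \<kappa> possible pairs (D, (h(a(i)) \<inter> D)_(i<\<sigma>)),
so by regularity of \<kappa> any family of \<kappa> such sets has a subfamily of size \<kappa> sharing one
pair (D, N). Because \<theta>^(<\<chi>) = \<theta>, a colour can code a set of fewer than \<chi> quadruples,
and a pr_1 colouring c is turned into a pr_0 colouring d: d(\<alpha>, \<beta>) is the v such that
(D, h(\<alpha>) \<inter> D, h(\<beta>) \<inter> D, v) lies in the set coded by c(\<alpha>, \<beta>). Applying pr_1 to the
homogeneous subfamily, with the colour of m coding {(D, N_i, N_j, \<tau>_ij(m)) | i, j < \<sigma>},
realises the matrix \<tau>. The converse implication is pr_0 for constant matrices.\<close>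

context
  includes cardinal_syntax
begin

section \<open>Cardinal bounds\<close>

lemma finite_ordLeq_infinite: "finite A \<Longrightarrow> infinite B \<Longrightarrow> |A| \<le>o |B|"
  using finite_ordLess_infinite[of "|A|" "|B|"] ordLess_imp_ordLeq
  by (simp add: Field_card_of card_of_well_order_on)

lemma card_of_Times_ordLeq_infinite:
  "infinite C \<Longrightarrow> |A| \<le>o |C| \<Longrightarrow> |B| \<le>o |C| \<Longrightarrow> |A \<times> B| \<le>o |C|"
  using card_of_Times_ordLeq_infinite_Field[of "|C|" A B]
  by (simp add: Field_card_of card_of_card_order_on)

lemma card_of_Un_ordLeq_infinite:
  "infinite C \<Longrightarrow> |A| \<le>o |C| \<Longrightarrow> |B| \<le>o |C| \<Longrightarrow> |A \<union> B| \<le>o |C|"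
  using card_of_Un_ordLeq_infinite_Field[of "|C|" A B]
  by (simp add: Field_card_of card_of_card_order_on)

lemma card_of_subset_image_ordLeq: "A \<subseteq> f ` C \<Longrightarrow> |A| \<le>o |C|"
  using card_of_mono1 card_of_image by (rule ordLeq_transitive)

lemma card_of_lists_ordLeq_infinite:
  assumes AB: "|A| \<le>o |B|" and B: "infinite B"
  shows "|lists A| \<le>o |B|"
proof -
  have length_n: "|{xs \<in> lists A. length xs = n}| \<le>o |B|" for n
  proof (induction n)
    case 0
    have "{xs \<in> lists A. length xs = 0} = {[]}" by auto
    then show ?case using finite_ordLeq_infinite[OF _ B, of "{[]}"] by simp
  next
    case (Suc n)
    have "{xs \<in> lists A. length xs = Suc n}
        \<subseteq> (\<lambda>(x, xs). x # xs) ` (A \<times> {xs \<in> lists A. length xs = n})"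
    proof
      fix xs assume "xs \<in> {xs \<in> lists A. length xs = Suc n}"
      then obtain y ys where "xs = y # ys" "y \<in> A" "ys \<in> lists A" "length ys = n"
        by (cases xs) auto
      then show "xs \<in> (\<lambda>(x, xs). x # xs) ` (A \<times> {xs \<in> lists A. length xs = n})"
        by (auto intro: image_eqI[where x = "(y, ys)"])
    qed
    then show ?case
      by (rule ordLeq_transitive[OF card_of_subset_image_ordLeq
            card_of_Times_ordLeq_infinite[OF B AB Suc.IH]])
  qed
  have "lists A = (\<Union>n. {xs \<in> lists A. length xs = n})" by auto
  moreover have "|\<Union>n. {xs \<in> lists A. length xs = n}| \<le>o |B|"
    by (rule card_of_UNION_ordLeq_infinite[OF B])
      (use infinite_iff_card_of_nat B length_n in auto)
  ultimately show ?thesis by simp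
qed

lemma card_of_Fpow_ordLeq_infinite:
  assumes "|A| \<le>o |B|" and "infinite B"
  shows "|Fpow A| \<le>o |B|"
proof -
  have "Fpow A \<subseteq> set ` lists A"
  proof
    fix X assume "X \<in> Fpow A"
    then obtain xs where "set xs = X" "X \<subseteq> A"
      unfolding Fpow_def using finite_list by blast
    then show "X \<in> set ` lists A" by (auto simp: lists_eq_set)
  qed
  then show ?thesis
    by (rule ordLeq_transitive[OF card_of_subset_image_ordLeq
          card_of_lists_ordLeq_infinite[OF assms]])
qed

lemma card_of_Func_mono:
  assumes "|B1| \<le>o |B2|"
  shows "|Func A B1| \<le>o |Func A B2|"
proof -
  obtain g where g: "inj_on g B1" "g ` B1 \<subseteq> B2"
    using card_of_ordLeq[THEN iffD2, OF assms] by blast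
  have "inj_on (Func_map A g id) (Func A B1)"
  proof (rule inj_onI)
    fix f1 f2 assume f: "f1 \<in> Func A B1" "f2 \<in> Func A B1"
      and eq: "Func_map A g id f1 = Func_map A g id f2"
    show "f1 = f2"
    proof (rule ext)
      fix a show "f1 a = f2 a"
      proof (cases "a \<in> A")
        case True
        then have "g (f1 a) = g (f2 a)"
          using fun_cong[OF eq, of a] by (simp add: Func_map_def)
        moreover have "f1 a \<in> B1" "f2 a \<in> B1" using f True unfolding Func_def by auto
        ultimately show ?thesis using g(1) by (simp add: inj_on_eq_iff)
      next
        case False
        then show ?thesis using f unfolding Func_def by simp
      qed
    qed
  qed
  moreover have "Func_map A g id ` Func A B1 \<subseteq> Func A B2"
  proof
    fix f assume "f \<in> Func_map A g id ` Func A B1"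
    then obtain f0 where "f0 \<in> Func A B1" "f = Func_map A g id f0" by blast
    then show "f \<in> Func A B2" using Func_map[OF _ g(2), of f0 A id] by simp
  qed
  ultimately show ?thesis using card_of_ordLeq[of "Func A B1" "Func A B2"] by blast
qed

section \<open>Sets of size below \<chi>\<close>

text \<open>Finite sets are included so that small sets stay closed under products when \<chi> is
finite.\<close>

definition small :: "'c rel \<Rightarrow> 'a set \<Rightarrow> bool" where
  "small ch Z \<longleftrightarrow> finite Z \<or> |Z| <o ch"

definition small_subsets :: "'c rel \<Rightarrow> 'a set \<Rightarrow> 'a set set" where
  "small_subsets ch A = {Z. Z \<subseteq> A \<and> small ch Z}"

lemma small_if_card_of_ordLeq: "small ch Z \<Longrightarrow> |Y| \<le>o |Z| \<Longrightarrow> small ch Y"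
  unfolding small_def using card_of_ordLeq_finite ordLeq_ordLess_trans by blast

lemma small_subset: "small ch Z \<Longrightarrow> Y \<subseteq> Z \<Longrightarrow> small ch Y"
  using small_if_card_of_ordLeq card_of_mono1 by blast

lemma small_image: "small ch Z \<Longrightarrow> small ch (f ` Z)"
  using small_if_card_of_ordLeq card_of_image by blast

lemma small_Times_ordLeq:
  assumes Y: "small ch Y" and XY: "|X| \<le>o |Y|"
  shows "small ch (X \<times> Y)"
proof (cases "finite Y")
  case True
  then show ?thesis using card_of_ordLeq_finite[OF XY] unfolding small_def by simp
next
  case False
  then have "|Y| <o ch" using Y unfolding small_def by blast
  moreover have "|X \<times> Y| \<le>o |Y|"
    using card_of_Times_ordLeq_infinite[OF False XY ordLeq_refl[OF card_of_Card_order]] .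
  ultimately show ?thesis unfolding small_def using ordLeq_ordLess_trans by blast
qed

lemma small_Times:
  assumes X: "small ch X" and Y: "small ch Y"
  shows "small ch (X \<times> Y)"
proof (cases "|X| \<le>o |Y|")
  case True
  then show ?thesis using small_Times_ordLeq[OF Y] by blast
next
  case False
  then have "|Y| \<le>o |X|" using ordLeq_total[OF card_of_Well_order card_of_Well_order] by blast
  then have "small ch (Y \<times> X)" using small_Times_ordLeq[OF X] by blast
  then show ?thesis
    using small_if_card_of_ordLeq ordIso_iff_ordLeq card_of_Times_commute by blast
qed

lemma card_of_lt_exp_set_mono:
  "|A| \<le>o |B| \<Longrightarrow> |lt_exp_set A ch| \<le>o |lt_exp_set B ch|"
  unfolding lt_exp_set_def by (simp add: card_of_Sigma_mono1 card_of_Func_mono)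

lemma card_of_ordLeq_lt_exp_set:
  assumes x: "x \<in> Field ch" "underS ch x \<noteq> {}"
  shows "|B| \<le>o |lt_exp_set B ch|"
proof -
  define G where "G b = (x, \<lambda>u. if u \<in> underS ch x then b else undefined)" for b :: 'b
  obtain u0 where u0: "u0 \<in> underS ch x" using x by blast
  have "inj_on G B" unfolding G_def inj_on_def using u0 by (auto dest: fun_cong[of _ _ u0])
  moreover have "G ` B \<subseteq> lt_exp_set B ch"
    using x unfolding G_def lt_exp_set_def Func_def by auto
  ultimately show ?thesis using card_of_ordLeq by blast
qed

lemma lt_exp_set_onto:
  assumes ch: "Card_order ch" and Z: "|Z| <o ch"
  shows "\<exists>y f. (y, f) \<in> lt_exp_set Z ch \<and> f ` underS ch y = Z"
proof -
  have wo: "Well_order ch" using ch card_order_on_well_order_on by blast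
  obtain y where y: "y \<in> Field ch" "|Z| =o Restr ch (underS ch y)"
    using ordLess_iff_ordIso_Restr[OF wo card_of_Well_order] Z by blast
  then obtain f where "iso (Restr ch (underS ch y)) |Z| f"
    using ordIso_symmetric unfolding ordIso_def by blast
  moreover have "Field (Restr ch (underS ch y)) = underS ch y"
    using Field_Restr_ofilter[OF wo wo_rel.underS_ofilter] wo by (simp add: wo_rel_def)
  ultimately have f: "bij_betw f (underS ch y) Z"
    unfolding iso_def by (simp add: Field_card_of)
  define f' where "f' u = (if u \<in> underS ch y then f u else undefined)" for u
  have "(y, f') \<in> lt_exp_set Z ch"
    using y f unfolding lt_exp_set_def Func_def f'_def bij_betw_def by auto
  moreover have "f' ` underS ch y = Z" using f unfolding f'_def bij_betw_def by auto
  ultimately show ?thesis by blast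
qed

lemma card_of_small_subsets_ordLeq:
  assumes ch: "Card_order ch" "x \<in> Field ch" "underS ch x \<noteq> {}"
    and AB: "|A| \<le>o |B|" and B: "infinite B"
  shows "|small_subsets ch A| \<le>o |lt_exp_set B ch|"
proof -
  let ?ranges = "(\<lambda>(y, f). f ` underS ch y) ` lt_exp_set A ch"
  have cover: "small_subsets ch A \<subseteq> Fpow A \<union> ?ranges"
  proof
    fix Z assume "Z \<in> small_subsets ch A"
    then have ZA: "Z \<subseteq> A" and "finite Z \<or> |Z| <o ch"
      unfolding small_subsets_def small_def by auto
    then consider "finite Z" | "|Z| <o ch" by blast
    then show "Z \<in> Fpow A \<union> ?ranges"
    proof cases
      case 1
      then show ?thesis using ZA unfolding Fpow_def by blast
    next
      case 2
      then obtain y f where yf: "(y, f) \<in> lt_exp_set Z ch" "f ` underS ch y = Z"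
        using lt_exp_set_onto[OF ch(1)] by blast
      then have "(y, f) \<in> lt_exp_set A ch"
        using ZA unfolding lt_exp_set_def Func_def by auto
      then show ?thesis using yf(2) by force
    qed
  qed
  have B_le: "|B| \<le>o |lt_exp_set B ch|" by (rule card_of_ordLeq_lt_exp_set[OF ch(2,3)])
  then have inf: "infinite (lt_exp_set B ch)" using B card_of_ordLeq_finite by blast
  have "|Fpow A| \<le>o |lt_exp_set B ch|"
    by (rule ordLeq_transitive[OF card_of_Fpow_ordLeq_infinite[OF AB B] B_le])
  moreover have "|?ranges| \<le>o |lt_exp_set B ch|"
    by (rule ordLeq_transitive[OF card_of_image card_of_lt_exp_set_mono[OF AB]])
  ultimately show ?thesis
    by (rule ordLeq_transitive[OF card_of_mono1[OF cover] card_of_Un_ordLeq_infinite[OF inf]])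
qed

lemma card_of_Pow_ordLeq_lt_exp_set:
  assumes ch: "Card_order ch" and L: "|L| <o ch" and l: "l0 \<in> L" "l1 \<in> L" "l0 \<noteq> l1"
  shows "|Pow L| \<le>o |lt_exp_set L ch|"
proof -
  obtain y f where yf: "(y, f) \<in> lt_exp_set L ch" "f ` underS ch y = L"
    using lt_exp_set_onto[OF ch L] by blast
  define G where
    "G Z = (y, \<lambda>u. if u \<in> underS ch y then (if f u \<in> Z then l1 else l0) else undefined)" for Z
  have "inj_on G (Pow L)"
  proof (rule inj_onI)
    fix Z1 Z2 assume Z: "Z1 \<in> Pow L" "Z2 \<in> Pow L" and eq: "G Z1 = G Z2"
    have "f u \<in> Z1 \<longleftrightarrow> f u \<in> Z2" if "u \<in> underS ch y" for u
      using fun_cong[OF arg_cong[OF eq, of snd], of u] that l(3) unfolding G_def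
      by (auto split: if_splits)
    then show "Z1 = Z2" using Z yf(2) by blast
  qed
  moreover have "G ` Pow L \<subseteq> lt_exp_set L ch"
    using yf(1) l unfolding G_def lt_exp_set_def Func_def by auto
  ultimately show ?thesis using card_of_ordLeq by blast
qed

lemma card_of_small_subsets_Times_ordLeq_lt_exp_set:
  assumes ch: "Card_order ch" "x \<in> Field ch" "underS ch x \<noteq> {}"
    and L: "infinite L" and I: "|I| \<le>o |L|"
  shows "|small_subsets ch L \<times> small_subsets ch (I \<times> L)| \<le>o |lt_exp_set L ch|"
proof -
  have L_le: "|L| \<le>o |lt_exp_set L ch|" by (rule card_of_ordLeq_lt_exp_set[OF ch(2,3)])
  have "infinite (lt_exp_set L ch)" using L card_of_ordLeq_finite[OF L_le] by blast
  moreover have "|small_subsets ch L| \<le>o |lt_exp_set L ch|"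
    by (rule card_of_small_subsets_ordLeq[OF ch ordLeq_refl[OF card_of_Card_order] L])
  moreover have "|small_subsets ch (I \<times> L)| \<le>o |lt_exp_set L ch|"
    by (rule card_of_small_subsets_ordLeq[OF ch card_of_Times_ordLeq_infinite[OF L I] L])
      (rule ordLeq_refl[OF card_of_Card_order])
  ultimately show ?thesis by (rule card_of_Times_ordLeq_infinite)
qed

section \<open>Homogeneous subfamilies\<close>

lemma Card_order_Field_Restr: "Card_order r \<Longrightarrow> a \<subseteq> Field r \<Longrightarrow> Field (Restr r a) = a"
  using Refl_Field_Restr2[of r a] card_order_on_well_order_on[of "Field r" r]
  unfolding order_on_defs by blast

lemma of_type_enumeration:
  assumes r: "Card_order r" and a: "of_type r a s"
  shows "\<exists>f. iso s (Restr r a) f \<and> bij_betw f (Field s) a"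
proof -
  have "a \<subseteq> Field r" "s =o Restr r a"
    using a ordIso_symmetric unfolding of_type_def by blast+
  then obtain f where "iso s (Restr r a) f" unfolding ordIso_def by blast
  moreover from this have "bij_betw f (Field s) a"
    using Card_order_Field_Restr[OF r \<open>a \<subseteq> Field r\<close>] unfolding iso_def by simp
  ultimately show ?thesis by blast
qed

lemma good_family_Field_nonempty:
  assumes r: "Card_order r" "infinite (Field r)" and good: "good_family r s \<A>"
  shows "Field s \<noteq> {}"
proof
  assume "Field s = {}"
  have "a = {}" if "a \<in> \<A>" for a
  proof -
    have "of_type r a s" using good that unfolding good_family_def by blast
    then obtain f where "bij_betw f (Field s) a" using of_type_enumeration[OF r(1)] by blast
    then show ?thesis using \<open>Field s = {}\<close> unfolding bij_betw_def by simp
  qed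
  then have "\<A> \<subseteq> {{}}" by blast
  then have "finite \<A>" using finite_subset by blast
  moreover have "r =o |\<A>|" using good ordIso_symmetric unfolding good_family_def by blast
  ultimately show False using card_of_ordIso_finite_Field[OF r(1), of \<A>] r(2) by simp
qed

lemma ordLess_nonempty_underS:
  assumes ch: "Card_order ch" and s: "Well_order s" "s <o ch" "Field s \<noteq> {}"
  shows "\<exists>x \<in> Field ch. underS ch x \<noteq> {}"
proof -
  have wo: "Well_order ch" using ch card_order_on_well_order_on by blast
  obtain x where x: "x \<in> Field ch" "s =o Restr ch (underS ch x)"
    using ordLess_iff_ordIso_Restr[OF wo s(1)] s(2) by blast
  then obtain f where "bij_betw f (Field s) (Field (Restr ch (underS ch x)))"
    unfolding ordIso_def iso_def by blast
  moreover have "Field (Restr ch (underS ch x)) = underS ch x"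
    using Field_Restr_ofilter[OF wo wo_rel.underS_ofilter] wo by (simp add: wo_rel_def)
  ultimately show ?thesis using x(1) s(3) unfolding bij_betw_def by auto
qed

lemma regularCard_pigeonhole:
  assumes r: "regularCard r" "Cinfinite r" and A: "|\<A>| =o r" and f: "|f ` \<A>| <o r"
  shows "\<exists>a0 \<in> \<A>. |{a \<in> \<A>. f a = f a0}| =o r"
proof (rule ccontr)
  assume no_large_fibre: "\<not> ?thesis"
  have "|{a \<in> \<A>. f a = z}| <o r" if z: "z \<in> f ` \<A>" for z
  proof -
    obtain a0 where a0: "a0 \<in> \<A>" "z = f a0" using z by blast
    have "{a \<in> \<A>. f a = z} \<subseteq> \<A>" by blast
    then have "|{a \<in> \<A>. f a = z}| \<le>o r" using ordLeq_ordIso_trans[OF card_of_mono1 A] by blast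
    moreover have "\<not> |{a \<in> \<A>. f a = z}| =o r" using no_large_fibre a0 by blast
    ultimately show ?thesis by (simp add: ordLeq_iff_ordLess_or_ordIso)
  qed
  then have "|\<Union>z \<in> f ` \<A>. {a \<in> \<A>. f a = z}| <o r"
    by (rule card_of_UNION_ordLess_infinite_Field_regularCard[OF r f, rule_format])
  moreover have "(\<Union>z \<in> f ` \<A>. {a \<in> \<A>. f a = z}) = \<A>" by blast
  ultimately have "|\<A>| <o r" by simp
  then show False using not_ordLess_ordIso A by blast
qed

lemma small_separating_set:
  assumes a: "small ch a" and h: "inj_on h a"
  shows "\<exists>D. D \<subseteq> \<Union>(h ` a) \<and> small ch D \<and> inj_on (\<lambda>\<alpha>. h \<alpha> \<inter> D) a"
proof -
  define sep where "sep \<alpha> \<beta> = (SOME x. x \<in> sym_diff (h \<alpha>) (h \<beta>))" for \<alpha> \<beta>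
  have sep: "sep \<alpha> \<beta> \<in> sym_diff (h \<alpha>) (h \<beta>)"
    if "\<alpha> \<in> a" "\<beta> \<in> a" "\<alpha> \<noteq> \<beta>" for \<alpha> \<beta>
  proof -
    have "h \<alpha> \<noteq> h \<beta>" using h that unfolding inj_on_def by blast
    then have "sym_diff (h \<alpha>) (h \<beta>) \<noteq> {}" by blast
    then show ?thesis unfolding sep_def by (rule some_in_eq[THEN iffD2])
  qed
  define D where "D = {sep \<alpha> \<beta> | \<alpha> \<beta>. \<alpha> \<in> a \<and> \<beta> \<in> a \<and> \<alpha> \<noteq> \<beta>}"
  have "D \<subseteq> \<Union>(h ` a)" unfolding D_def using sep by blast
  moreover have "small ch D"
  proof -
    have "D \<subseteq> case_prod sep ` (a \<times> a)" unfolding D_def by force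
    then show ?thesis using small_subset small_image[OF small_Times[OF a a]] by blast
  qed
  moreover have "inj_on (\<lambda>\<alpha>. h \<alpha> \<inter> D) a"
  proof (rule inj_onI, rule ccontr)
    fix \<alpha> \<beta> assume \<alpha>\<beta>: "\<alpha> \<in> a" "\<beta> \<in> a" "\<alpha> \<noteq> \<beta>" and eq: "h \<alpha> \<inter> D = h \<beta> \<inter> D"
    have "sep \<alpha> \<beta> \<in> D" unfolding D_def using \<alpha>\<beta> by blast
    then show False using sep[OF \<alpha>\<beta>] eq by blast
  qed
  ultimately show ?thesis by blast
qed

lemma card_of_ordLeq_if_small:
  assumes ch: "Card_order ch" and L: "infinite L"
    and lt: "|lt_exp_set L ch| <o r" and pow: "r \<le>o |Pow L|" and I: "small ch I"
  shows "|I| \<le>o |L|"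
proof (cases "finite I")
  case True
  then show ?thesis by (rule finite_ordLeq_infinite[OF _ L])
next
  case False
  then have I_ch: "|I| <o ch" using I unfolding small_def by blast
  show ?thesis
  proof (rule ccontr)
    assume "\<not> |I| \<le>o |L|"
    then have "|L| <o |I|"
      by (rule not_ordLeq_iff_ordLess[OF card_of_Well_order card_of_Well_order, THEN iffD1])
    then have L_ch: "|L| <o ch" by (rule ordLess_transitive[OF _ I_ch])
    obtain l0 where l0: "l0 \<in> L" using L by (metis finite.emptyI ex_in_conv)
    obtain l1 where l1: "l1 \<in> L - {l0}" using infinite_remove[OF L] by (metis finite.emptyI ex_in_conv)
    have "|Pow L| \<le>o |lt_exp_set L ch|"
      using card_of_Pow_ordLeq_lt_exp_set[OF ch L_ch l0] l1 by blast
    then have "|Pow L| <o |Pow L|"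
      by (rule ordLeq_ordLess_trans[OF _ ordLess_ordLeq_trans[OF lt pow]])
    then show False by (simp add: ordLess_irreflexive)
  qed
qed

lemma trace_set_eq_iff:
  "{(i, y) \<in> I \<times> D. y \<in> X i} = {(i, y) \<in> I \<times> D. y \<in> Y i} \<longleftrightarrow> (\<forall>i \<in> I. X i \<inter> D = Y i \<inter> D)"
  by blast

lemma regularCard_constant_traces:
  fixes X :: "'a \<Rightarrow> 'i \<Rightarrow> 'l set"
  assumes r: "Card_order r" "regularCard r" "infinite (Field r)"
    and ch: "Card_order ch" "x \<in> Field ch" "underS ch x \<noteq> {}"
    and L: "infinite L" and codes: "|lt_exp_set L ch| <o r"
    and I: "small ch I" "|I| \<le>o |L|"
    and A: "|\<A>| =o r" and D: "\<And>a. a \<in> \<A> \<Longrightarrow> D a \<in> small_subsets ch L"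
  shows "\<exists>a0 \<in> \<A>. |{a \<in> \<A>. D a = D a0 \<and> (\<forall>i \<in> I. X a i \<inter> D a0 = X a0 i \<inter> D a0)}| =o r"
proof -
  \<comment> \<open>the traces are recorded as a small subset of I \<times> L, so there are at most \<lambda>^(<\<chi>) patterns\<close>
  define pattern where "pattern a = (D a, {(i, y) \<in> I \<times> D a. y \<in> X a i})" for a
  have "pattern ` \<A> \<subseteq> small_subsets ch L \<times> small_subsets ch (I \<times> L)"
  proof (rule image_subsetI)
    fix a assume a: "a \<in> \<A>"
    then have Da: "D a \<subseteq> L" "small ch (D a)" using D unfolding small_subsets_def by blast+
    have "{(i, y) \<in> I \<times> D a. y \<in> X a i} \<subseteq> I \<times> D a" by blast
    then have "small ch {(i, y) \<in> I \<times> D a. y \<in> X a i}"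
      using small_subset[OF small_Times[OF I(1) Da(2)]] by blast
    moreover have "{(i, y) \<in> I \<times> D a. y \<in> X a i} \<subseteq> I \<times> L" using Da(1) by blast
    ultimately show "pattern a \<in> small_subsets ch L \<times> small_subsets ch (I \<times> L)"
      using D[OF a] unfolding pattern_def small_subsets_def by simp
  qed
  moreover have "|small_subsets ch L \<times> small_subsets ch (I \<times> L)| \<le>o |lt_exp_set L ch|"
    by (rule card_of_small_subsets_Times_ordLeq_lt_exp_set[OF ch L I(2)])
  ultimately have "|pattern ` \<A>| <o r"
    by (rule ordLeq_ordLess_trans[OF ordLeq_transitive[OF card_of_mono1] codes])
  moreover have "Cinfinite r" using r unfolding cinfinite_def by blast
  ultimately obtain a0 where "a0 \<in> \<A>" "|{a \<in> \<A>. pattern a = pattern a0}| =o r"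
    using regularCard_pigeonhole[OF r(2) _ A] by blast
  moreover have "pattern a = pattern a0 \<longleftrightarrow>
      D a = D a0 \<and> (\<forall>i \<in> I. X a i \<inter> D a0 = X a0 i \<inter> D a0)" for a
    unfolding pattern_def using trace_set_eq_iff[of I "D a0" "X a" "X a0"] by auto
  ultimately show ?thesis by auto
qed

lemma homogeneous_subfamily:
  fixes h :: "'k \<Rightarrow> 'l set" and e :: "'k set \<Rightarrow> 'i \<Rightarrow> 'k"
  assumes r: "Card_order r" "regularCard r" "infinite (Field r)"
    and ch: "Card_order ch" "x \<in> Field ch" "underS ch x \<noteq> {}"
    and L: "infinite L" and codes: "|lt_exp_set L ch| <o r"
    and h: "inj_on h (Field r)" "h ` Field r \<subseteq> Pow L"
    and I: "small ch I" "|I| \<le>o |L|"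
    and A: "|\<A>| =o r" "\<And>a. a \<in> \<A> \<Longrightarrow> a \<subseteq> Field r \<and> bij_betw (e a) I a"
  shows "\<exists>\<A>' \<subseteq> \<A>. |\<A>'| =o r \<and> (\<exists>D N. D \<in> small_subsets ch L \<and> inj_on N I \<and>
           (\<forall>i \<in> I. N i \<subseteq> D) \<and> (\<forall>a \<in> \<A>'. \<forall>i \<in> I. h (e a i) \<inter> D = N i))"
proof -
  have "\<exists>D. D \<in> small_subsets ch L \<and> inj_on (\<lambda>\<alpha>. h \<alpha> \<inter> D) a" if a: "a \<in> \<A>" for a
  proof -
    have "e a ` I = a" using A(2)[OF a] unfolding bij_betw_def by blast
    then have "small ch a" using small_image[OF I(1), of "e a"] by simp
    moreover have "inj_on h a" using A(2)[OF a] h(1) inj_on_subset by blast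
    ultimately obtain D where "D \<subseteq> \<Union>(h ` a)" "small ch D" "inj_on (\<lambda>\<alpha>. h \<alpha> \<inter> D) a"
      using small_separating_set by blast
    moreover have "\<Union>(h ` a) \<subseteq> L" using A(2)[OF a] h(2) by blast
    ultimately show ?thesis unfolding small_subsets_def by blast
  qed
  then obtain D where D: "\<And>a. a \<in> \<A> \<Longrightarrow> D a \<in> small_subsets ch L \<and> inj_on (\<lambda>\<alpha>. h \<alpha> \<inter> D a) a"
    by metis
  obtain a0 where a0: "a0 \<in> \<A>"
    and large: "|{a \<in> \<A>. D a = D a0 \<and> (\<forall>i \<in> I. h (e a i) \<inter> D a0 = h (e a0 i) \<inter> D a0)}| =o r"
    using regularCard_constant_traces[OF r ch L codes I A(1), of D "\<lambda>a i. h (e a i)"] D by blast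
  define N where "N i = h (e a0 i) \<inter> D a0" for i
  have "e a0 ` I = a0" "inj_on (e a0) I" using A(2)[OF a0] unfolding bij_betw_def by blast+
  then have "inj_on N I"
    using comp_inj_on[of "e a0" I "\<lambda>\<alpha>. h \<alpha> \<inter> D a0"] D[OF a0] unfolding N_def comp_def by simp
  moreover have "D a0 \<in> small_subsets ch L" "\<forall>i \<in> I. N i \<subseteq> D a0"
    using D[OF a0] unfolding N_def by blast+
  ultimately show ?thesis
    using large[folded N_def]
    by (intro exI[of _ "{a \<in> \<A>. D a = D a0 \<and> (\<forall>i \<in> I. h (e a i) \<inter> D a0 = N i)}"]) blast
qed

section \<open>Coding matrices of colours\<close>

definition code_space :: "'c rel \<Rightarrow> 'l set \<Rightarrow> 't set \<Rightarrow> ('l set \<times> 'l set \<times> 'l set \<times> 't) set set"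
  where "code_space ch L T =
    small_subsets ch (small_subsets ch L \<times> small_subsets ch L \<times> small_subsets ch L \<times> T)"

definition matrix_code ::
  "'l set \<Rightarrow> ('i \<Rightarrow> 'l set) \<Rightarrow> 'i set \<Rightarrow> ('i \<Rightarrow> 'i \<Rightarrow> 't) \<Rightarrow> ('l set \<times> 'l set \<times> 'l set \<times> 't) set"
  where "matrix_code D N I v = {(D, N i, N j, v i j) | i j. i \<in> I \<and> j \<in> I}"

definition read_code :: "('l set \<times> 'l set \<times> 'l set \<times> 't) set \<Rightarrow> 'l set \<Rightarrow> 'l set \<Rightarrow> 't set"
  where "read_code W X Y = {v. \<exists>D. (D, X \<inter> D, Y \<inter> D, v) \<in> W}"

definition decoded_colouring ::
  "'t set \<Rightarrow> 'c rel \<Rightarrow> 'l set \<Rightarrow> (('l set \<times> 'l set \<times> 'l set \<times> 't) set \<Rightarrow> 't) \<Rightarrow>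
    ('k \<Rightarrow> 'l set) \<Rightarrow> ('k \<Rightarrow> 'k \<Rightarrow> 't) \<Rightarrow> 'k \<Rightarrow> 'k \<Rightarrow> 't"
  where "decoded_colouring T ch L enc h c \<alpha> \<beta> =
    (let V = read_code (inv_into (code_space ch L T) enc (c \<alpha> \<beta>)) (h \<alpha>) (h \<beta>)
     in if \<exists>v \<in> T. V = {v} then the_elem V else c \<alpha> \<beta>)"

lemma card_of_code_space_ordLeq:
  assumes ch: "Card_order ch" "x \<in> Field ch" "underS ch x \<noteq> {}"
    and T: "infinite T" and L_T: "|L| \<le>o |T|" and fix_point: "|lt_exp_set T ch| =o |T|"
  shows "|code_space ch L T| \<le>o |T|"
proof -
  have S: "|small_subsets ch L| \<le>o |T|"
    by (rule ordLeq_ordIso_trans[OF card_of_small_subsets_ordLeq[OF ch L_T T] fix_point])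
  have "|small_subsets ch L \<times> small_subsets ch L \<times> small_subsets ch L \<times> T| \<le>o |T|"
    using card_of_Times_ordLeq_infinite[OF T S card_of_Times_ordLeq_infinite[OF T S
        card_of_Times_ordLeq_infinite[OF T S ordLeq_refl[OF card_of_Card_order]]]] .
  then show ?thesis unfolding code_space_def
    by (rule ordLeq_ordIso_trans[OF card_of_small_subsets_ordLeq[OF ch _ T] fix_point])
qed

lemma matrix_code_in_code_space:
  assumes I: "small ch I" and D: "D \<in> small_subsets ch L" and N: "\<forall>i \<in> I. N i \<subseteq> D"
    and v: "\<forall>i \<in> I. \<forall>j \<in> I. v i j \<in> T"
  shows "matrix_code D N I v \<in> code_space ch L T"
proof -
  have "N i \<in> small_subsets ch L" if "i \<in> I" for i
    using D N that small_subset unfolding small_subsets_def by blast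
  then have "matrix_code D N I v
      \<subseteq> small_subsets ch L \<times> small_subsets ch L \<times> small_subsets ch L \<times> T"
    using D v unfolding matrix_code_def by auto
  moreover have "matrix_code D N I v \<subseteq> (\<lambda>(i, j). (D, N i, N j, v i j)) ` (I \<times> I)"
    unfolding matrix_code_def by force
  then have "small ch (matrix_code D N I v)"
    using small_subset small_image[OF small_Times[OF I I]] by blast
  ultimately show ?thesis unfolding code_space_def small_subsets_def by blast
qed

lemma read_matrix_code:
  assumes N: "inj_on N I" and ij: "i \<in> I" "j \<in> I" and XY: "X \<inter> D = N i" "Y \<inter> D = N j"
  shows "read_code (matrix_code D N I v) X Y = {v i j}"
proof
  show "read_code (matrix_code D N I v) X Y \<subseteq> {v i j}"
  proof
    fix w assume "w \<in> read_code (matrix_code D N I v) X Y"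
    then obtain D' where "(D', X \<inter> D', Y \<inter> D', w) \<in> matrix_code D N I v"
      unfolding read_code_def by blast
    then obtain i' j' where i'j': "i' \<in> I" "j' \<in> I"
      and "(D', X \<inter> D', Y \<inter> D', w) = (D, N i', N j', v i' j')"
      unfolding matrix_code_def by blast
    then have "X \<inter> D = N i'" "Y \<inter> D = N j'" "w = v i' j'" by auto
    moreover have "i' = i" "j' = j"
      using inj_onD[OF N _ i'j'(1) ij(1)] inj_onD[OF N _ i'j'(2) ij(2)] calculation(1,2) XY
      by simp_all
    ultimately show "w \<in> {v i j}" by simp
  qed
  have "(D, X \<inter> D, Y \<inter> D, v i j) \<in> matrix_code D N I v"
    unfolding matrix_code_def XY using ij by blast
  then show "{v i j} \<subseteq> read_code (matrix_code D N I v) X Y"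
    unfolding read_code_def by blast
qed

lemma decoded_colouring_in:
  "c \<alpha> \<beta> \<in> T \<Longrightarrow> decoded_colouring T ch L enc h c \<alpha> \<beta> \<in> T"
  unfolding decoded_colouring_def Let_def by auto

lemma decoded_colouring_matrix_code:
  assumes enc: "inj_on enc (code_space ch L T)" and W: "matrix_code D N I v \<in> code_space ch L T"
    and c: "c \<alpha> \<beta> = enc (matrix_code D N I v)"
    and N: "inj_on N I" and ij: "i \<in> I" "j \<in> I" and h: "h \<alpha> \<inter> D = N i" "h \<beta> \<inter> D = N j"
    and v: "v i j \<in> T"
  shows "decoded_colouring T ch L enc h c \<alpha> \<beta> = v i j"
  using read_matrix_code[OF N ij h, of v] v
  unfolding decoded_colouring_def c inv_into_f_f[OF enc W] by simp

section \<open>pr_0 and pr_1\<close>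

lemma pr0_imp_pr1:
  assumes r: "Card_order r" and pr0: "pr0 r T ch M p"
  shows "pr1 r T ch M p"
proof -
  obtain c where c_T: "\<forall>(\<alpha>, \<beta>) \<in> pairs r. c \<alpha> \<beta> \<in> T" and c: "pr0_witness r T ch M p c"
    using pr0 unfolding pr0_def by blast
  have "pr1_witness r T ch M p c"
    unfolding pr1_witness_def
  proof (intro allI impI ballI)
    fix s :: "'a rel" and \<A> \<tau>
    assume s: "Well_order s \<and> s <o ch" and good: "good_family r s \<A>" and \<tau>: "\<tau> \<in> M \<rightarrow> T"
    obtain a b f g where ab: "a \<in> \<A>" "b \<in> \<A>" "set_less r a b"
      and fg: "iso s (Restr r a) f" "iso s (Restr r b) g"
      and eq: "\<forall>i \<in> Field s. \<forall>j \<in> Field s. c (f i) (g j) = \<tau> (p (f i) (g j))"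
      using c[unfolded pr0_witness_def, rule_format, OF s good, of "\<lambda>i j. \<tau>"] \<tau> by blast
    have "a \<subseteq> Field r" "b \<subseteq> Field r"
      using ab good unfolding good_family_def of_type_def by auto
    then have "f ` Field s = a" "g ` Field s = b"
      using fg Card_order_Field_Restr[OF r] unfolding iso_def bij_betw_def by auto
    then have "\<forall>\<alpha> \<in> a. \<forall>\<beta> \<in> b. c \<alpha> \<beta> = \<tau> (p \<alpha> \<beta>)" using eq by blast
    then show "\<exists>a \<in> \<A>. \<exists>b \<in> \<A>. set_less r a b \<and> (\<forall>\<alpha> \<in> a. \<forall>\<beta> \<in> b. c \<alpha> \<beta> = \<tau> (p \<alpha> \<beta>))"
      using ab by blast
  qed
  then show ?thesis using c_T unfolding pr1_def by blast
qed

lemma decoded_colouring_realises_matrix: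
  fixes h :: "'k \<Rightarrow> 'l set" and e :: "'k set \<Rightarrow> 'k \<Rightarrow> 'k" and p :: "'k \<Rightarrow> 'k \<Rightarrow> 'm"
    and \<tau> :: "'k \<Rightarrow> 'k \<Rightarrow> 'm \<Rightarrow> 't"
  assumes enc: "inj_on enc (code_space ch L T)" "enc ` code_space ch L T \<subseteq> T"
    and p: "\<forall>(\<alpha>, \<beta>) \<in> pairs r. p \<alpha> \<beta> \<in> M"
    and c: "pr1_witness r T ch M p c"
    and s: "Well_order s" "s <o ch" and good: "good_family r s \<A>"
    and e: "\<And>a. a \<in> \<A> \<Longrightarrow> bij_betw (e a) (Field s) a"
    and D: "D \<in> small_subsets ch L" and N: "inj_on N (Field s)" "\<forall>i \<in> Field s. N i \<subseteq> D"
    and hom: "\<forall>a \<in> \<A>. \<forall>i \<in> Field s. h (e a i) \<inter> D = N i"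
    and \<tau>: "\<forall>i \<in> Field s. \<forall>j \<in> Field s. \<tau> i j \<in> M \<rightarrow> T"
  shows "\<exists>a \<in> \<A>. \<exists>b \<in> \<A>. set_less r a b \<and> (\<forall>i \<in> Field s. \<forall>j \<in> Field s.
           decoded_colouring T ch L enc h c (e a i) (e b j) = \<tau> i j (p (e a i) (e b j)))"
proof -
  have s_small: "small ch (Field s)" using ordLess_Field[OF s(2)] unfolding small_def by blast
  define W where "W m = matrix_code D N (Field s) (\<lambda>i j. \<tau> i j m)" for m
  have W: "W m \<in> code_space ch L T" if "m \<in> M" for m
  proof -
    have "\<forall>i \<in> Field s. \<forall>j \<in> Field s. \<tau> i j m \<in> T" using \<tau> that by blast
    then show ?thesis unfolding W_def by (rule matrix_code_in_code_space[OF s_small D N(2)])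
  qed
  then have "(\<lambda>m. enc (W m)) \<in> M \<rightarrow> T" using enc(2) by blast
  then have "\<exists>a \<in> \<A>. \<exists>b \<in> \<A>. set_less r a b \<and>
      (\<forall>\<alpha> \<in> a. \<forall>\<beta> \<in> b. c \<alpha> \<beta> = (\<lambda>m. enc (W m)) (p \<alpha> \<beta>))"
    using s by (intro c[unfolded pr1_witness_def, rule_format, OF _ good]) blast
  then obtain a b where ab: "a \<in> \<A>" "b \<in> \<A>" "set_less r a b"
    and c_ab: "\<forall>\<alpha> \<in> a. \<forall>\<beta> \<in> b. c \<alpha> \<beta> = enc (W (p \<alpha> \<beta>))"
    by auto
  have "decoded_colouring T ch L enc h c (e a i) (e b j) = \<tau> i j (p (e a i) (e b j))"
    if ij: "i \<in> Field s" "j \<in> Field s" for i j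
  proof -
    have \<alpha>: "e a i \<in> a" and \<beta>: "e b j \<in> b"
      using e ab(1,2) ij unfolding bij_betw_def by blast+
    then have m: "p (e a i) (e b j) \<in> M"
      using ab(3) p unfolding set_less_def pairs_def by blast
    have "c (e a i) (e b j) = enc (W (p (e a i) (e b j)))" using c_ab \<alpha> \<beta> by blast
    moreover have "h (e a i) \<inter> D = N i" "h (e b j) \<inter> D = N j" using hom ab(1,2) ij by blast+
    moreover have "\<tau> i j (p (e a i) (e b j)) \<in> T" using \<tau> ij m by blast
    ultimately show ?thesis
      unfolding W_def by (rule decoded_colouring_matrix_code[OF enc(1) W[OF m, unfolded W_def] _ N(1) ij])
  qed
  then show ?thesis using ab by blast
qed

lemma decoded_colouring_pr0_witness:
  fixes r :: "'k rel" and L :: "'l set" and ch :: "'c rel" and T :: "'t set"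
    and h :: "'k \<Rightarrow> 'l set" and p :: "'k \<Rightarrow> 'k \<Rightarrow> 'm"
  assumes r: "Card_order r" "regularCard r" "infinite (Field r)"
    and ch: "Card_order ch" "x \<in> Field ch" "underS ch x \<noteq> {}"
    and L: "infinite L" and lt: "|lt_exp_set L ch| <o r" and pow: "r \<le>o |Pow L|"
    and h: "inj_on h (Field r)" "h ` Field r \<subseteq> Pow L"
    and enc: "inj_on enc (code_space ch L T)" "enc ` code_space ch L T \<subseteq> T"
    and p: "\<forall>(\<alpha>, \<beta>) \<in> pairs r. p \<alpha> \<beta> \<in> M"
    and c: "pr1_witness r T ch M p c"
  shows "pr0_witness r T ch M p (decoded_colouring T ch L enc h c)"
  unfolding pr0_witness_def
proof (intro allI impI)
  fix s :: "'k rel" and \<A> and \<tau> :: "'k \<Rightarrow> 'k \<Rightarrow> 'm \<Rightarrow> 't"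
  assume s: "Well_order s \<and> s <o ch" and good: "good_family r s \<A>"
    and \<tau>: "\<forall>i \<in> Field s. \<forall>j \<in> Field s. \<tau> i j \<in> M \<rightarrow> T"
  have of_type: "of_type r a s" if "a \<in> \<A>" for a
    using good that unfolding good_family_def by blast
  then have "\<exists>f. iso s (Restr r a) f \<and> bij_betw f (Field s) a" if "a \<in> \<A>" for a
    using of_type_enumeration[OF r(1)] that by blast
  then obtain e where e: "\<And>a. a \<in> \<A> \<Longrightarrow> iso s (Restr r a) (e a) \<and> bij_betw (e a) (Field s) a"
    by metis
  have A: "|\<A>| =o r" "\<And>a. a \<in> \<A> \<Longrightarrow> a \<subseteq> Field r \<and> bij_betw (e a) (Field s) a"
    using good e of_type unfolding good_family_def of_type_def by simp_all
  have s_small: "small ch (Field s)" using ordLess_Field s unfolding small_def by blast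
  obtain \<A>' D N where A': "\<A>' \<subseteq> \<A>" "|\<A>'| =o r" and D: "D \<in> small_subsets ch L"
    and N: "inj_on N (Field s)" "\<forall>i \<in> Field s. N i \<subseteq> D"
    and hom: "\<forall>a \<in> \<A>'. \<forall>i \<in> Field s. h (e a i) \<inter> D = N i"
    using homogeneous_subfamily[OF r ch L lt h s_small
        card_of_ordLeq_if_small[OF ch(1) L lt pow s_small] A]
    by blast
  have "good_family r s \<A>'" using good A' unfolding good_family_def by blast
  then obtain a b where "a \<in> \<A>'" "b \<in> \<A>'" "set_less r a b"
    and "\<forall>i \<in> Field s. \<forall>j \<in> Field s.
           decoded_colouring T ch L enc h c (e a i) (e b j) = \<tau> i j (p (e a i) (e b j))"
    using decoded_colouring_realises_matrix[OF enc p c _ _ _ _ D N hom \<tau>] s A'(1) A(2) by blast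
  then show "\<exists>a \<in> \<A>. \<exists>b \<in> \<A>. set_less r a b \<and>
      (\<exists>f g. iso s (Restr r a) f \<and> iso s (Restr r b) g \<and>
        (\<forall>i \<in> Field s. \<forall>j \<in> Field s.
          decoded_colouring T ch L enc h c (f i) (g j) = \<tau> i j (p (f i) (g j))))"
    using A'(1) e by blast
qed

lemma pr1_imp_pr0:
  fixes r :: "'k rel" and L :: "'l set" and ch :: "'c rel" and T :: "'t set"
    and p :: "'k \<Rightarrow> 'k \<Rightarrow> 'm"
  assumes r: "Card_order r" "regularCard r" "infinite (Field r)"
    and ch: "Card_order ch"
    and lt: "|lt_exp_set L ch| <o r" and pow: "r \<le>o |Pow L|"
    and L_T: "|lt_exp_set L ch| \<le>o |T|" and fix_point: "|lt_exp_set T ch| =o |T|"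
    and p: "\<forall>(\<alpha>, \<beta>) \<in> pairs r. p \<alpha> \<beta> \<in> M"
    and pr1: "pr1 r T ch M p"
  shows "pr0 r T ch M p"
proof -
  obtain c where c_T: "\<forall>(\<alpha>, \<beta>) \<in> pairs r. c \<alpha> \<beta> \<in> T" and c: "pr1_witness r T ch M p c"
    using pr1 unfolding pr1_def by blast
  show ?thesis
  proof (cases "\<exists>x \<in> Field ch. underS ch x \<noteq> {}")
    case True
    then obtain x where x: "x \<in> Field ch" "underS ch x \<noteq> {}" by blast
    have r_Pow: "|Field r| \<le>o |Pow L|"
      by (rule ordIso_ordLeq_trans[OF card_of_Field_ordIso[OF r(1)] pow])
    then obtain h :: "'k \<Rightarrow> 'l set" where h: "inj_on h (Field r)" "h ` Field r \<subseteq> Pow L"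
      using card_of_ordLeq[THEN iffD2] by blast
    have L: "infinite L" using r(3) card_of_ordLeq_finite[OF r_Pow] by auto
    have "|L| \<le>o |T|" by (rule ordLeq_transitive[OF card_of_ordLeq_lt_exp_set[OF x] L_T])
    moreover from this have T: "infinite T" using L card_of_ordLeq_finite by blast
    ultimately obtain enc where enc: "inj_on enc (code_space ch L T)" "enc ` code_space ch L T \<subseteq> T"
      using card_of_ordLeq[THEN iffD2, OF card_of_code_space_ordLeq[OF ch x T _ fix_point]] by blast
    have "\<forall>(\<alpha>, \<beta>) \<in> pairs r. decoded_colouring T ch L enc h c \<alpha> \<beta> \<in> T"
      using c_T decoded_colouring_in by fast
    then show ?thesis
      using decoded_colouring_pr0_witness[OF r ch x L lt pow h enc p c] unfolding pr0_def by blast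
  next
    case False
    \<comment> \<open>\<chi> \<le> 1: all ordinals below \<chi> are empty, so there are no good families\<close>
    have no_good_family: False
      if "Well_order s" "s <o ch" "good_family r s \<A>" for s :: "'k rel" and \<A>
      using False ordLess_nonempty_underS[OF ch that(1,2)]
        good_family_Field_nonempty[OF r(1,3) that(3)] by blast
    then have "pr0_witness r T ch M p c" unfolding pr0_witness_def by blast
    then show ?thesis using c_T unfolding pr0_def by blast
  qed
qed

end

theorem theoremB:
  fixes r :: "'k rel" and M :: "'m set" and L :: "'l set" and ch :: "'c rel" and T :: "'t set"
    and p :: "'k \<Rightarrow> 'k \<Rightarrow> 'm"
  assumes kappa_card: "Card_order r"
    and kappa_regular: "regularCard r"
    and kappa_uncountable: "\<not> countable (Field r)"
    and mu_le: "(card_of M, r) \<in> ordLeq"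
    and lambda_le: "(card_of L, r) \<in> ordLeq"
    and chi_card: "Card_order ch"
    and chi_le: "(ch, r) \<in> ordLeq"
    and theta_le: "(card_of T, r) \<in> ordLeq"
    and lam_chi_lt_kappa: "(card_of (lt_exp_set L ch), r) \<in> ordLess"
    and kappa_le_pow: "(r, card_of (Pow L)) \<in> ordLeq"
    and lam_chi_le_theta: "(card_of (lt_exp_set L ch), card_of T) \<in> ordLeq"
    and theta_chi_eq: "(card_of (lt_exp_set T ch), card_of T) \<in> ordIso"
    and p_partition: "\<forall>(\<alpha>, \<beta>)\<in>pairs r. p \<alpha> \<beta> \<in> M"
  shows "pr1 r T ch M p \<longleftrightarrow> pr0 r T ch M p"
proof
  have "infinite (Field r)" using kappa_uncountable countable_finite by blast
  then show "pr0 r T ch M p" if "pr1 r T ch M p"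
    using pr1_imp_pr0[OF kappa_card kappa_regular _ chi_card lam_chi_lt_kappa kappa_le_pow
        lam_chi_le_theta theta_chi_eq p_partition that] by blast
  show "pr1 r T ch M p" if "pr0 r T ch M p"
    using pr0_imp_pr1[OF kappa_card that] .
qed

end
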